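(* Let $N$ be a non-negative integer and $c_0,\dots,c_4$ parameters with $c_0+c_1+c_2+c_3+c_4=-2N-3$. For non-negative integers $i,j,x,y$ with $i+j\le N$ and $x+y\le N$, \[ \frac{T_{i,j}(x,y;c_1,c_2,c_3,c_4;N)}{\Omega(i;c_1,c_2,c_3;N-j)\,\Lambda(j;c_4,c_0;N)}=\frac{T_{y,x}(j,i;c_4,c_0,c_3,c_1;N)}{\Omega(y;c_4,c_0,c_3;N-x)\,\Lambda(x;c_1,c_2;N)}. \]
   Context: Notation: $(a)_n=a(a+1)\cdots(a+n-1)$, $(a)_0=1$; $c_{ij}=c_i+c_j$, $c_{ijk}=c_i+c_j+c_k$. Parameters are generic so that no denominator vanishes. For $0\le n,x\le N$: \[ \Omega(n;c_1,c_2,c_3;N)=\binom{N}{n}(2n+c_{23}+1)\frac{(c_2+1)_n(N+2+c_{123})_n(c_1+1)_{N-n}}{(c_3+1)_n(c_{23}+n+1)_{N+1}}, \] \[ p_n(x;c_1,c_2,c_3;N)=\Omega(n;c_1,c_2,c_3;N)\,{}_4F_3\!\left(\begin{matrix}-n,\ n+c_{23}+1,\ -x,\ x+c_{12}+1\\ c_2+1,\ N+2+c_{123},\ -N\end{matrix};1\right) \] (terminating sum), and $\Lambda(x;c_1,c_2;N)=(-1)^x\binom{N}{x}(2x+c_{12}+1)\frac{(c_2+1)_x}{(c_1+1)_x(x+c_{12}+1)_{N+1}}$. For parameters $(a_1,a_2,a_3,a_4)$, set $a_0=-2N-3-a_1-a_2-a_3-a_4$ and define, for non-negative integers $i,j,x,y$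 with $i+j\le N$, $x+y\le N$, \[ T_{i,j}(x,y;a_1,a_2,a_3,a_4;N)=p_i(x;a_1,a_2,a_3;N-j)\,p_j(y;a_3,a_0,a_4;N-x). \] In particular, in $T_{y,x}(j,i;c_4,c_0,c_3,c_1;N)$ the role of $a_0$ is played by $c_2$. *)

theory Defs
  imports Complex_Main
begin

definition hyp43 :: "nat \<Rightarrow> complex \<Rightarrow> complex \<Rightarrow> complex \<Rightarrow> complex \<Rightarrow> complex \<Rightarrow> complex \<Rightarrow> complex" where
  "hyp43 n a2 a3 a4 b1 b2 b3 =
     (\<Sum>k=0..n. pochhammer (- of_nat n) k * pochhammer a2 k * pochhammer a3 k * pochhammer a4 k
        / (pochhammer b1 k * pochhammer b2 k * pochhammer b3 k * fact k))"

definition Omega :: "nat \<Rightarrow> complex \<Rightarrow> complex \<Rightarrow> complex \<Rightarrow> nat \<Rightarrow> complex" where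
  "Omega n c1 c2 c3 N =
     of_nat (N choose n) * (2 * of_nat n + c2 + c3 + 1)
     * (pochhammer (c2 + 1) n * pochhammer (of_nat N + 2 + c1 + c2 + c3) n * pochhammer (c1 + 1) (N - n))
     / (pochhammer (c3 + 1) n * pochhammer (c2 + c3 + of_nat n + 1) (N + 1))"

definition pp :: "nat \<Rightarrow> nat \<Rightarrow> complex \<Rightarrow> complex \<Rightarrow> complex \<Rightarrow> nat \<Rightarrow> complex" where
  "pp n x c1 c2 c3 N =
     Omega n c1 c2 c3 N *
     hyp43 n (of_nat n + c2 + c3 + 1) (- of_nat x) (of_nat x + c1 + c2 + 1)
             (c2 + 1) (of_nat N + 2 + c1 + c2 + c3) (- of_nat N)"

definition Lambda :: "nat \<Rightarrow> complex \<Rightarrow> complex \<Rightarrow> nat \<Rightarrow> complex" where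
  "Lambda x c1 c2 N =
     (-1) ^ x * of_nat (N choose x) * (2 * of_nat x + c1 + c2 + 1)
     * pochhammer (c2 + 1) x / (pochhammer (c1 + 1) x * pochhammer (of_nat x + c1 + c2 + 1) (N + 1))"

definition TT :: "nat \<Rightarrow> nat \<Rightarrow> nat \<Rightarrow> nat \<Rightarrow> complex \<Rightarrow> complex \<Rightarrow> complex \<Rightarrow> complex \<Rightarrow> nat \<Rightarrow> complex" where
  "TT i j x y a1 a2 a3 a4 N =
     (let a0 = - 2 * of_nat N - 3 - a1 - a2 - a3 - a4
      in pp i x a1 a2 a3 (N - j) * pp j y a3 a0 a4 (N - x))"

text \<open>Genericity of the parameters (c0,...,c4): no sum of a nonempty proper
  subfamily of the parameters is an integer.  This guarantees that no denominator
  in the identity vanishes.\<close>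
definition generic_params :: "complex list \<Rightarrow> bool" where
  "generic_params cs \<longleftrightarrow>
     (\<forall>S. S \<subseteq> {..<length cs} \<and> S \<noteq> {} \<and> S \<noteq> {..<length cs} \<longrightarrow> (\<Sum>i\<in>S. cs ! i) \<notin> \<int>)"

end

theory Submission
  imports Defs
begin

(* Both sides factor as two Omega's times two terminating 4F3's.  The 4F3's agree by Racah
   duality: the 4F3 with numerator parameters -n, n + a, -m, m + b is symmetric under
   (n, a) <-> (m, b), since after extending both sums to n + m the summands coincide.
   Cancelling Omega(i) on the left and Omega(y) on the right leaves
     Omega(j; c3, c0, c4; N - x) / Lambda(j; c4, c0; N)
       = Omega(x; c3, c2, c1; N - j) / Lambda(x; c1, c2; N).
   Both quotients are products of Pochhammer symbols; using c0 + ... + c4 = -2N - 3 and the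
   reflection (-b)_k = (-1)^k (b - k + 1)_k, each factor of one side becomes the matching
   factor of the other. *)

lemma add_of_nat_notin_Ints:
  fixes a :: "'a::ring_1"
  assumes "a \<notin> \<int>"
  shows "a + of_nat m \<notin> \<int>"
  using assms Ints_diff[of "a + of_nat m" "of_nat m"] by auto

lemma add_of_nat_nonzero_if_notin_Ints:
  fixes a :: "'a::ring_1"
  assumes "a \<notin> \<int>"
  shows "a + of_nat m \<noteq> 0"
  using add_of_nat_notin_Ints[OF assms] by (metis Ints_0)

lemma pochhammer_add_of_nat_nonzero:
  fixes a :: "'a::field_char_0"
  assumes "a \<notin> \<int>"
  shows "pochhammer (a + of_nat m) n \<noteq> 0"
  using add_of_nat_notin_Ints[OF assms, of m]
  by (metis Ints_minus Ints_of_nat pochhammer_eq_0_iff)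

lemma generic_params_notin_Ints:
  assumes "generic_params [c0, c1, c2, c3, c4]"
  shows "c0 \<notin> \<int>" "c1 \<notin> \<int>" "c2 \<notin> \<int>" "c3 \<notin> \<int>" "c4 \<notin> \<int>"
    "c0 + c4 \<notin> \<int>" "c1 + c2 \<notin> \<int>" "c2 + c3 \<notin> \<int>" "c0 + c3 \<notin> \<int>"
    "c1 + c2 + c3 \<notin> \<int>" "c0 + c3 + c4 \<notin> \<int>"
proof -
  have proper: "(\<Sum>i\<in>S. [c0, c1, c2, c3, c4] ! i) \<notin> \<int>"
    if "S \<subseteq> {..<5}" "S \<noteq> {}" "m < 5" "m \<notin> S" for S and m :: nat
  proof -
    have "S \<noteq> {..<5}" using that(3,4) by auto
    moreover have "length [c0, c1, c2, c3, c4] = 5" by simp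
    ultimately show ?thesis using assms that(1,2) unfolding generic_params_def by metis
  qed
  show "c0 \<notin> \<int>" using proper[of "{0}" 1] by simp
  show "c1 \<notin> \<int>" using proper[of "{1}" 0] by simp
  show "c2 \<notin> \<int>" using proper[of "{2}" 0] by simp
  show "c3 \<notin> \<int>" using proper[of "{3}" 0] by simp
  show "c4 \<notin> \<int>" using proper[of "{4}" 0] by simp
  show "c0 + c4 \<notin> \<int>" using proper[of "{0,4}" 1] by simp
  show "c1 + c2 \<notin> \<int>" using proper[of "{1,2}" 0] by simp
  show "c2 + c3 \<notin> \<int>" using proper[of "{2,3}" 0] by simp
  show "c0 + c3 \<notin> \<int>" using proper[of "{0,3}" 1] by simp
  show "c1 + c2 + c3 \<notin> \<int>" using proper[of "{1,2,3}" 0] by (simp add: add_ac)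
  show "c0 + c3 + c4 \<notin> \<int>" using proper[of "{0,3,4}" 1] by (simp add: add_ac)
qed

lemma hyp43_extend_sum:
  assumes "n \<le> K"
  shows "hyp43 n a2 a3 a4 b1 b2 b3 =
     (\<Sum>k=0..K. pochhammer (- of_nat n) k * pochhammer a2 k * pochhammer a3 k * pochhammer a4 k
        / (pochhammer b1 k * pochhammer b2 k * pochhammer b3 k * fact k))"
  unfolding hyp43_def
  by (rule sum.mono_neutral_left) (use assms in \<open>auto simp: pochhammer_of_nat_eq_0_iff\<close>)

lemma hyp43_duality:
  "hyp43 n (of_nat n + a) (- of_nat m) (of_nat m + b) b1 b2 b3
   = hyp43 m (of_nat m + b) (- of_nat n) (of_nat n + a) b1 b2 b3"
  by (simp add: hyp43_extend_sum[of n "n + m"] hyp43_extend_sum[of m "n + m"] mult_ac)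

definition racah_poly :: "nat \<Rightarrow> nat \<Rightarrow> complex \<Rightarrow> complex \<Rightarrow> complex \<Rightarrow> nat \<Rightarrow> complex" where
  "racah_poly n x c1 c2 c3 N =
     hyp43 n (of_nat n + c2 + c3 + 1) (- of_nat x) (of_nat x + c1 + c2 + 1)
             (c2 + 1) (of_nat N + 2 + c1 + c2 + c3) (- of_nat N)"

lemma pp_eq_Omega_racah_poly:
  "pp n x c1 c2 c3 N = Omega n c1 c2 c3 N * racah_poly n x c1 c2 c3 N"
  by (simp add: pp_def racah_poly_def)

lemma racah_poly_duality: "racah_poly x n c3 c2 c1 N = racah_poly n x c1 c2 c3 N"
  using hyp43_duality[of x "c2 + c1 + 1" n "c3 + c2 + 1" "c2 + 1" _ "- of_nat N"]
  by (simp add: racah_poly_def add_ac)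

lemma TT_eq_Omega_racah_poly:
  assumes "a0 + a1 + a2 + a3 + a4 = - 2 * of_nat N - 3"
  shows "TT i j x y a1 a2 a3 a4 N = Omega i a1 a2 a3 (N - j) * Omega j a3 a0 a4 (N - x)
           * (racah_poly i x a1 a2 a3 (N - j) * racah_poly j y a3 a0 a4 (N - x))"
proof -
  have "- 2 * of_nat N - 3 - a1 - a2 - a3 - a4 = a0" using assms by algebra
  then show ?thesis by (simp add: TT_def pp_eq_Omega_racah_poly mult_ac)
qed

lemma Omega_nonzero:
  fixes a b c :: complex
  assumes "n \<le> M" and "a \<notin> \<int>" "b \<notin> \<int>" "c \<notin> \<int>" "b + c \<notin> \<int>" "a + b + c \<notin> \<int>"
  shows "Omega n a b c M \<noteq> 0"
proof -
  have "2 * of_nat n + b + c + 1 \<noteq> 0"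
    using add_of_nat_nonzero_if_notin_Ints[OF assms(5), of "2 * n + 1"] by (simp add: add_ac)
  moreover have "pochhammer (of_nat M + 2 + a + b + c) n \<noteq> 0"
    using pochhammer_add_of_nat_nonzero[OF assms(6), of "M + 2"] by (simp add: add_ac)
  moreover have "pochhammer (b + c + of_nat n + 1) (M + 1) \<noteq> 0"
    using pochhammer_add_of_nat_nonzero[OF assms(5), of "n + 1"] by (simp add: add_ac)
  moreover have "pochhammer (a + 1) (M - n) \<noteq> 0" "pochhammer (b + 1) n \<noteq> 0"
    "pochhammer (c + 1) n \<noteq> 0"
    using assms(2-4) pochhammer_add_of_nat_nonzero[where m = 1, unfolded of_nat_1] by blast+
  ultimately show ?thesis using assms(1) by (simp add: Omega_def)
qed

lemma Omega_div_Lambda: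
  fixes d0 d3 d4 :: complex
  assumes "j + x \<le> N" and "d0 \<notin> \<int>" "d4 \<notin> \<int>" "d0 + d4 \<notin> \<int>"
  shows "Omega j d3 d0 d4 (N - x) / Lambda j d4 d0 N =
    (-1) ^ j * (of_nat ((N - x) choose j) / of_nat (N choose j))
    * pochhammer (of_nat (N - x) + 2 + d3 + d0 + d4) j * pochhammer (d3 + 1) (N - x - j)
    * pochhammer (of_nat (N - x) + of_nat j + d0 + d4 + 2) x"
proof -
  define L where "L = N - x"
  define E where "E = 2 * of_nat j + d0 + d4 + (1::complex)"
  have N: "N + 1 = (L + 1) + x" using assms(1) by (simp add: L_def)
  have split: "pochhammer (of_nat j + d4 + d0 + 1) (N + 1) =
      pochhammer (d0 + d4 + of_nat j + 1) (L + 1)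
      * pochhammer (of_nat L + of_nat j + d0 + d4 + 2) x"
    unfolding N pochhammer_product' by (simp add: add_ac)
  have "pochhammer (d0 + d4 + of_nat j + 1) (L + 1) \<noteq> 0"
    "pochhammer (of_nat L + of_nat j + d0 + d4 + 2) x \<noteq> 0"
    using pochhammer_add_of_nat_nonzero[OF assms(4), of "j + 1"]
      pochhammer_add_of_nat_nonzero[OF assms(4), of "L + j + 2"]
    by (simp_all add: add_ac)
  moreover have "pochhammer (d0 + 1) j \<noteq> 0" "pochhammer (d4 + 1) j \<noteq> 0"
    using assms(2,3) pochhammer_add_of_nat_nonzero[where m = 1, unfolded of_nat_1] by blast+
  moreover have "E \<noteq> 0"
    using add_of_nat_nonzero_if_notin_Ints[OF assms(4), of "2 * j + 1"]
    by (simp add: E_def add_ac)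
  moreover have "of_nat (N choose j) \<noteq> (0::complex)" using assms(1) by simp
  moreover have "(-1::complex) ^ j * (-1) ^ j = 1" by (simp flip: power_add)
  moreover have "2 * of_nat j + d4 + d0 + 1 = E" by (simp add: E_def)
  ultimately show ?thesis
    unfolding L_def[symmetric] Omega_def Lambda_def split E_def[symmetric]
    by (simp add: field_simps)
qed

lemma binomial_ratio_swap:
  assumes "j + x \<le> N"
  shows "of_nat ((N - x) choose j) / of_nat (N choose j)
       = (of_nat ((N - j) choose x) / of_nat (N choose x) :: 'a::field_char_0)"
proof -
  have "N - x - j = N - j - x" by simp
  with assms show ?thesis by (simp add: binomial_fact field_simps)
qed

lemma Omega_div_Lambda_swap:
  fixes c0 c1 c2 c3 c4 :: complex
  assumes sum: "c0 + c1 + c2 + c3 + c4 = - 2 * of_nat N - 3"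
    and "c0 \<notin> \<int>" "c4 \<notin> \<int>" "c0 + c4 \<notin> \<int>"
    and "c2 \<notin> \<int>" "c1 \<notin> \<int>" "c2 + c1 \<notin> \<int>"
    and "x \<le> N" "j \<le> N"
  shows "Omega j c3 c0 c4 (N - x) / Lambda j c4 c0 N
       = Omega x c3 c2 c1 (N - j) / Lambda x c1 c2 N"
proof (cases "j + x \<le> N")
  case False
  with assms(8,9) have "N - x < j" "N - j < x" by linarith+
  then show ?thesis by (simp add: Omega_def binomial_eq_0)
next
  case True
  have Nx: "of_nat (N - x) = (of_nat N - of_nat x :: complex)"
    and Nj: "of_nat (N - j) = (of_nat N - of_nat j :: complex)"
    using True by (simp_all add: of_nat_diff)
  have refl_j: "pochhammer (of_nat (N - x) + 2 + c3 + c0 + c4) j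
      = (-1) ^ j * pochhammer (of_nat (N - j) + of_nat x + c2 + c1 + 2) j"
  proof -
    have "of_nat (N - x) + 2 + c3 + c0 + c4 = - (of_nat N + of_nat x + 1 + c1 + c2)"
      using sum unfolding Nx by algebra
    moreover have "of_nat N + of_nat x + 1 + c1 + c2 - of_nat j + 1
        = of_nat (N - j) + of_nat x + c2 + c1 + (2::complex)"
      unfolding Nj by (simp add: algebra_simps)
    ultimately show ?thesis by (simp only: pochhammer_minus)
  qed
  have refl_x: "pochhammer (of_nat (N - x) + of_nat j + c0 + c4 + 2) x
      = (-1) ^ x * pochhammer (of_nat (N - j) + 2 + c3 + c2 + c1) x"
  proof -
    have "of_nat (N - x) + of_nat j + c0 + c4 + 2
        = - (of_nat N + of_nat x + 1 + c1 + c2 + c3 - of_nat j)"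
      using sum unfolding Nx by algebra
    moreover have "of_nat N + of_nat x + 1 + c1 + c2 + c3 - of_nat j - of_nat x + 1
        = of_nat (N - j) + 2 + c3 + c2 + (c1::complex)"
      unfolding Nj by (simp add: algebra_simps)
    ultimately show ?thesis by (simp only: pochhammer_minus)
  qed
  have "(-1::complex) ^ j * (-1) ^ j = 1" by (simp flip: power_add)
  moreover have "N - x - j = N - j - x" by simp
  moreover have "x + j \<le> N" using True by simp
  ultimately show ?thesis
    unfolding Omega_div_Lambda[OF True assms(2-4)] Omega_div_Lambda[OF \<open>x + j \<le> N\<close> assms(5-7)]
      refl_j refl_x binomial_ratio_swap[OF True]
    by (simp add: algebra_simps)
qed

theorem mainTheorem2:
  fixes N i j x y :: nat and c0 c1 c2 c3 c4 :: complex
  assumes "c0 + c1 + c2 + c3 + c4 = - 2 * of_nat N - 3"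
    and "generic_params [c0, c1, c2, c3, c4]"
    and "i + j \<le> N" and "x + y \<le> N"
  shows "TT i j x y c1 c2 c3 c4 N / (Omega i c1 c2 c3 (N - j) * Lambda j c4 c0 N)
       = TT y x j i c4 c0 c3 c1 N / (Omega y c4 c0 c3 (N - x) * Lambda x c1 c2 N)"
proof -
  note generic = generic_params_notin_Ints[OF assms(2)]
  have sum_dual: "c2 + c4 + c0 + c3 + c1 = - 2 * of_nat N - 3" using assms(1) by algebra
  have "Omega i c1 c2 c3 (N - j) \<noteq> 0"
    by (rule Omega_nonzero) (use assms(3) generic in auto)
  moreover have "Omega y c4 c0 c3 (N - x) \<noteq> 0"
    by (rule Omega_nonzero) (use assms(4) generic in \<open>auto simp: add_ac\<close>)
  moreover have "Omega j c3 c0 c4 (N - x) / Lambda j c4 c0 N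
      = Omega x c3 c2 c1 (N - j) / Lambda x c1 c2 N"
    by (rule Omega_div_Lambda_swap[OF assms(1)]) (use assms(3,4) generic in \<open>auto simp: add_ac\<close>)
  ultimately show ?thesis
    unfolding TT_eq_Omega_racah_poly[OF assms(1)] TT_eq_Omega_racah_poly[OF sum_dual]
      racah_poly_duality[of y j c4 c0 c3] racah_poly_duality[of x i c3 c2 c1]
    by (simp add: mult.commute) (metis times_divide_eq_left)
qed

end
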